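(* Let $\mathsf{R}^s$ be the set of all symmetric Epstein relations and $\mathsf{R}^n$ the set of all Epstein relations $\mathfrak{R}$ satisfying: for all $\varphi,\psi\in\mathsf{FOR}$, if $\langle\neg\varphi,\psi\rangle\in\mathfrak{R}$ then $\langle\varphi,\psi\rangle\in\mathfrak{R}$. Neither $\mathsf{R}^s$ nor $\mathsf{R}^n$ is definable.
   Context: Language: propositional letters $\Phi=\{p_0,p_1,\dots\}$; connectives $\neg$, $\lor,\wedge,\to,\leftrightarrow,\vartriangle,\looparrowright$; $\mathsf{FOR}$ the set of all formulas. An Epstein model is $\langle v,\mathfrak{R}\rangle$ with $v:\Phi\to\{0,1\}$ and $\mathfrak{R}\subseteq\mathsf{FOR}^2$ (an Epstein relation); truth: letters via $v$, boolean connectives classical, $\langle v,\mathfrak{R}\rangle\vDash\varphi\vartriangle\psi$ iff both true and $\langle\varphi,\psi\rangle\in\mathfrak{R}$; $\langle v,\mathfrak{R}\rangle\vDash\varphi\looparrowright\psi$ iff $\varphi\to\psi$ true and $\langle\varphi,\psi\rangle\in\mathfrak{R}$. $\mathfrak{R}\vDash\varphi$ iff $\langle v,\mathfrak{R}\rangle\vDash\varphi$ for every valuation $v$; $\mathfrak{R}\vDash\Gamma$ iff $\mathfrak{R}\vDash\gamma$ for every $\gamma\in\Gamma$. A set $\mathsf{K}$ of Epstein relations is definable iff there is $\Gamma\subseteq\mathsf{FOR}$ such that for every Epstein relation $\mathfrak{R}$: $\mathfrak{R}\vDash\Gamma$ iff $\mathfrak{R}\in\mathsf{K}$. *)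

theory Defs
  imports Main
begin

datatype form =
    Var nat
  | Neg form
  | Disj form form
  | Conj form form
  | Imp form form
  | Iff form form
  | Rel form form        (* \<vartriangle> *)
  | RImp form form       (* \<looparrowright> *)

type_synonym epstein_rel = "(form \<times> form) set"

fun sat :: "(nat \<Rightarrow> bool) \<Rightarrow> epstein_rel \<Rightarrow> form \<Rightarrow> bool" where
  "sat v R (Var n) = v n"
| "sat v R (Neg a) = (\<not> sat v R a)"
| "sat v R (Disj a b) = (sat v R a \<or> sat v R b)"
| "sat v R (Conj a b) = (sat v R a \<and> sat v R b)"
| "sat v R (Imp a b) = (sat v R a \<longrightarrow> sat v R b)"
| "sat v R (Iff a b) = (sat v R a \<longleftrightarrow> sat v R b)"
| "sat v R (Rel a b) = (sat v R a \<and> sat v R b \<and> (a, b) \<in> R)"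
| "sat v R (RImp a b) = ((sat v R a \<longrightarrow> sat v R b) \<and> (a, b) \<in> R)"

definition rel_valid :: "epstein_rel \<Rightarrow> form \<Rightarrow> bool" where
  "rel_valid R a \<longleftrightarrow> (\<forall>v. sat v R a)"

definition rel_valid_set :: "epstein_rel \<Rightarrow> form set \<Rightarrow> bool" where
  "rel_valid_set R \<Gamma> \<longleftrightarrow> (\<forall>g\<in>\<Gamma>. rel_valid R g)"

definition definable :: "epstein_rel set \<Rightarrow> bool" where
  "definable K \<longleftrightarrow> (\<exists>\<Gamma>. \<forall>R. rel_valid_set R \<Gamma> \<longleftrightarrow> R \<in> K)"

definition R_s :: "epstein_rel set" where
  "R_s = {R. \<forall>a b. (a, b) \<in> R \<longrightarrow> (b, a) \<in> R}"

definition R_n :: "epstein_rel set" where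
  "R_n = {R. \<forall>a b. (Neg a, b) \<in> R \<longrightarrow> (a, b) \<in> R}"

end

theory Submission
  imports Defs
begin

text \<open>A pair \<open>(a, b)\<close> of an Epstein relation is invisible under a valuation making \<open>a\<close> true and
  \<open>b\<close> false: it can only matter for \<open>a \<vartriangle> b\<close> or \<open>a \<looparrowright> b\<close>, and both are false anyway.
  Hence a class defined by a set of formulas is closed under adding or removing such pairs,
  valuation by valuation. The relation \<open>{(p, \<not>p)}\<close> is not symmetric, yet under each valuation
  it agrees with the symmetric relation \<open>{}\<close> (if \<open>p\<close> is true) or \<open>{(p, \<not>p), (\<not>p, p)}\<close> (if \<open>p\<close> is
  false); similarly \<open>{(\<not>p, p \<and> \<not>p)}\<close> violates the condition of \<open>R\<^sup>n\<close> but agrees under each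
  valuation with \<open>{}\<close> or with \<open>{(\<not>p, p \<and> \<not>p), (p, p \<and> \<not>p)}\<close>.\<close>

lemma sat_eq_if_differences_refuted:
  assumes "\<And>a b. ((a, b) \<in> R) \<noteq> ((a, b) \<in> R') \<Longrightarrow> sat v R a \<and> \<not> sat v R b"
  shows "sat v R f = sat v R' f"
  using assms by (induction f) auto

lemma definable_closed_under_pointwise_agreement:
  assumes "definable K"
    and "\<And>v. \<exists>R\<in>K. \<forall>f. sat v R f = sat v R' f"
  shows "R' \<in> K"
proof -
  obtain \<Gamma> where \<Gamma>: "\<And>R. rel_valid_set R \<Gamma> \<longleftrightarrow> R \<in> K"
    using assms(1) unfolding definable_def by blast
  have "sat v R' g" if "g \<in> \<Gamma>" for g v
  proof -
    obtain R where "R \<in> K" and "\<forall>f. sat v R f = sat v R' f"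
      using assms(2) by blast
    with \<Gamma> that show ?thesis
      unfolding rel_valid_set_def rel_valid_def by blast
  qed
  then show ?thesis
    using \<Gamma> unfolding rel_valid_set_def rel_valid_def by blast
qed

lemma R_s_agrees_pointwise:
  "\<exists>R\<in>R_s. \<forall>f. sat v R f = sat v {(Var 0, Neg (Var 0))} f"
proof (cases "v 0")
  case True
  show ?thesis
    by (rule bexI[of _ "{}"], intro allI sat_eq_if_differences_refuted)
       (auto simp: R_s_def True)
next
  case False
  show ?thesis
    by (rule bexI[of _ "{(Var 0, Neg (Var 0)), (Neg (Var 0), Var 0)}"],
        intro allI sat_eq_if_differences_refuted)
       (auto simp: R_s_def False)
qed

lemma R_n_agrees_pointwise:
  "\<exists>R\<in>R_n. \<forall>f. sat v R f = sat v {(Neg (Var 0), Conj (Var 0) (Neg (Var 0)))} f"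
proof (cases "v 0")
  case False
  show ?thesis
    by (rule bexI[of _ "{}"], intro allI sat_eq_if_differences_refuted)
       (auto simp: R_n_def False)
next
  case True
  show ?thesis
    by (rule bexI[of _ "{(Neg (Var 0), Conj (Var 0) (Neg (Var 0))),
                         (Var 0, Conj (Var 0) (Neg (Var 0)))}"],
        intro allI sat_eq_if_differences_refuted)
       (auto simp: R_n_def True)
qed

theorem mainTheorem11:
  shows "\<not> definable R_s \<and> \<not> definable R_n"
proof
  have "{(Var 0, Neg (Var 0))} \<notin> R_s"
    unfolding R_s_def by auto
  then show "\<not> definable R_s"
    using definable_closed_under_pointwise_agreement R_s_agrees_pointwise by blast
next
  have "{(Neg (Var 0), Conj (Var 0) (Neg (Var 0)))} \<notin> R_n"
    unfolding R_n_def by auto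
  then show "\<not> definable R_n"
    using definable_closed_under_pointwise_agreement R_n_agrees_pointwise by blast
qed

end
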